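(* Let $G_*$ be a (not necessarily symmetric) crossed simplicial group with structural projection $\pi\colon G_*\to N_*$, and suppose there exists a morphism of simplicial sets $\eta\colon N_*\to G_*$ with $\pi\circ\eta=\mathrm{id}_{N_*}$. Then $\pi\colon G_*\to N_*$ is a Kan fibration of simplicial sets.
   Context: A crossed simplicial group $G_*$ consists of groups $G_n$ ($n\ge0$), a left action of $G_n$ on $[n]=\{0,\dots,n\}$, and maps $d_i\colon G_n\to G_{n-1}$, $s_i\colon G_n\to G_{n+1}$ making $G_*$ a simplicial set, such that $d_i(gh)=d_i(g)d_{g^{-1}(i)}(h)$ and $s_i(gh)=s_i(g)s_{g^{-1}(i)}(h)$. By the structure theorem of Fiedorowicz–Loday and Krasauskas there is a canonical short exact sequence of crossed simplicial groups $1\to P_*\to G_*\xrightarrow{\pi}N_*\to1$ where $P_*$ is a simplicial group and $N_*$ is one of the seven crossed simplicial groups $\{1\}, C_*, \mathbb{Z}/2, S_*, D_*, \mathbb{Z}/2\times S_*, H_*$; $\pi$ is called the structural projection. *)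

theory Defs
  imports "HOL-Algebra.Group"
begin

text \<open>The face map d n i sends
  X (Suc n) to X n (for i \<le> Suc n); the degeneracy s n i sends X n to
  X (Suc n) (for i \<le> n).\<close>

definition simplicial_set ::
  "(nat \<Rightarrow> 'a set) \<Rightarrow> (nat \<Rightarrow> nat \<Rightarrow> 'a \<Rightarrow> 'a) \<Rightarrow> (nat \<Rightarrow> nat \<Rightarrow> 'a \<Rightarrow> 'a) \<Rightarrow> bool" where
  "simplicial_set X d s \<longleftrightarrow>
     (\<forall>n i x. i \<le> Suc n \<longrightarrow> x \<in> X (Suc n) \<longrightarrow> d n i x \<in> X n) \<and>
     (\<forall>n i x. i \<le> n \<longrightarrow> x \<in> X n \<longrightarrow> s n i x \<in> X (Suc n)) \<and>
     (\<forall>n i j x. i < j \<longrightarrow> j \<le> Suc (Suc n) \<longrightarrow> x \<in> X (Suc (Suc n)) \<longrightarrow>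
        d n i (d (Suc n) j x) = d n (j - 1) (d (Suc n) i x)) \<and>
     (\<forall>n i j x. i < j \<longrightarrow> j \<le> Suc n \<longrightarrow> x \<in> X (Suc n) \<longrightarrow>
        d (Suc n) i (s (Suc n) j x) = s n (j - 1) (d n i x)) \<and>
     (\<forall>n j x. j \<le> n \<longrightarrow> x \<in> X n \<longrightarrow> d n j (s n j x) = x \<and> d n (Suc j) (s n j x) = x) \<and>
     (\<forall>n i j x. Suc j < i \<longrightarrow> i \<le> Suc (Suc n) \<longrightarrow> x \<in> X (Suc n) \<longrightarrow>
        d (Suc n) i (s (Suc n) j x) = s n j (d n (i - 1) x)) \<and>
     (\<forall>n i j x. i \<le> j \<longrightarrow> j \<le> n \<longrightarrow> x \<in> X n \<longrightarrow>
        s (Suc n) i (s n j x) = s (Suc n) (Suc j) (s n i x))"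

definition simplicial_map ::
  "(nat \<Rightarrow> 'a set) \<Rightarrow> (nat \<Rightarrow> nat \<Rightarrow> 'a \<Rightarrow> 'a) \<Rightarrow> (nat \<Rightarrow> nat \<Rightarrow> 'a \<Rightarrow> 'a) \<Rightarrow>
   (nat \<Rightarrow> 'b set) \<Rightarrow> (nat \<Rightarrow> nat \<Rightarrow> 'b \<Rightarrow> 'b) \<Rightarrow> (nat \<Rightarrow> nat \<Rightarrow> 'b \<Rightarrow> 'b) \<Rightarrow>
   (nat \<Rightarrow> 'a \<Rightarrow> 'b) \<Rightarrow> bool" where
  "simplicial_map X d s Y d' s' f \<longleftrightarrow>
     (\<forall>n x. x \<in> X n \<longrightarrow> f n x \<in> Y n) \<and>
     (\<forall>n i x. i \<le> Suc n \<longrightarrow> x \<in> X (Suc n) \<longrightarrow> f n (d n i x) = d' n i (f (Suc n) x)) \<and>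
     (\<forall>n i x. i \<le> n \<longrightarrow> x \<in> X n \<longrightarrow> f (Suc n) (s n i x) = s' n i (f n x))"

text \<open>The horn is given by faces xs i \<in> X n for i \<in> [n+1] - {k}, compatible in the sense
  d_i x_j = d_(j-1) x_i for i < j (a vacuous condition when n = 0).\<close>

definition kan_fibration ::
  "(nat \<Rightarrow> 'a set) \<Rightarrow> (nat \<Rightarrow> nat \<Rightarrow> 'a \<Rightarrow> 'a) \<Rightarrow> (nat \<Rightarrow> nat \<Rightarrow> 'a \<Rightarrow> 'a) \<Rightarrow>
   (nat \<Rightarrow> 'b set) \<Rightarrow> (nat \<Rightarrow> nat \<Rightarrow> 'b \<Rightarrow> 'b) \<Rightarrow> (nat \<Rightarrow> nat \<Rightarrow> 'b \<Rightarrow> 'b) \<Rightarrow>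
   (nat \<Rightarrow> 'a \<Rightarrow> 'b) \<Rightarrow> bool" where
  "kan_fibration X d s Y d' s' f \<longleftrightarrow>
     simplicial_map X d s Y d' s' f \<and>
     (\<forall>n k xs y.
        k \<le> Suc n \<longrightarrow>
        (\<forall>i. i \<le> Suc n \<longrightarrow> i \<noteq> k \<longrightarrow> xs i \<in> X n) \<longrightarrow>
        (\<forall>i j. i < j \<longrightarrow> j \<le> Suc n \<longrightarrow> i \<noteq> k \<longrightarrow> j \<noteq> k \<longrightarrow> 0 < n \<longrightarrow>
            d (n - 1) i (xs j) = d (n - 1) (j - 1) (xs i)) \<longrightarrow>
        y \<in> Y (Suc n) \<longrightarrow>
        (\<forall>i. i \<le> Suc n \<longrightarrow> i \<noteq> k \<longrightarrow> d' n i y = f n (xs i)) \<longrightarrow>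
        (\<exists>x \<in> X (Suc n). (\<forall>i. i \<le> Suc n \<longrightarrow> i \<noteq> k \<longrightarrow> d n i x = xs i) \<and> f (Suc n) x = y))"

definition crossed_simplicial_group ::
  "(nat \<Rightarrow> 'a monoid) \<Rightarrow> (nat \<Rightarrow> 'a \<Rightarrow> nat \<Rightarrow> nat) \<Rightarrow>
   (nat \<Rightarrow> nat \<Rightarrow> 'a \<Rightarrow> 'a) \<Rightarrow> (nat \<Rightarrow> nat \<Rightarrow> 'a \<Rightarrow> 'a) \<Rightarrow> bool" where
  "crossed_simplicial_group G act d s \<longleftrightarrow>
     (\<forall>n. group (G n)) \<and>
     simplicial_set (\<lambda>n. carrier (G n)) d s \<and>
     (\<forall>n g. g \<in> carrier (G n) \<longrightarrow> bij_betw (act n g) {..n} {..n}) \<and>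
     (\<forall>n i. i \<le> n \<longrightarrow> act n \<one>\<^bsub>G n\<^esub> i = i) \<and>
     (\<forall>n g h i. g \<in> carrier (G n) \<longrightarrow> h \<in> carrier (G n) \<longrightarrow> i \<le> n \<longrightarrow>
        act n (g \<otimes>\<^bsub>G n\<^esub> h) i = act n g (act n h i)) \<and>
     (\<forall>n i g h. i \<le> Suc n \<longrightarrow> g \<in> carrier (G (Suc n)) \<longrightarrow> h \<in> carrier (G (Suc n)) \<longrightarrow>
        d n i (g \<otimes>\<^bsub>G (Suc n)\<^esub> h) =
        d n i g \<otimes>\<^bsub>G n\<^esub> d n (act (Suc n) (inv\<^bsub>G (Suc n)\<^esub> g) i) h) \<and>
     (\<forall>n i g h. i \<le> n \<longrightarrow> g \<in> carrier (G n) \<longrightarrow> h \<in> carrier (G n) \<longrightarrow>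
        s n i (g \<otimes>\<^bsub>G n\<^esub> h) =
        s n i g \<otimes>\<^bsub>G (Suc n)\<^esub> s n (act n (inv\<^bsub>G n\<^esub> g) i) h)"

definition csg_morphism ::
  "(nat \<Rightarrow> 'a monoid) \<Rightarrow> (nat \<Rightarrow> 'a \<Rightarrow> nat \<Rightarrow> nat) \<Rightarrow>
   (nat \<Rightarrow> nat \<Rightarrow> 'a \<Rightarrow> 'a) \<Rightarrow> (nat \<Rightarrow> nat \<Rightarrow> 'a \<Rightarrow> 'a) \<Rightarrow>
   (nat \<Rightarrow> 'b monoid) \<Rightarrow> (nat \<Rightarrow> 'b \<Rightarrow> nat \<Rightarrow> nat) \<Rightarrow>
   (nat \<Rightarrow> nat \<Rightarrow> 'b \<Rightarrow> 'b) \<Rightarrow> (nat \<Rightarrow> nat \<Rightarrow> 'b \<Rightarrow> 'b) \<Rightarrow>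
   (nat \<Rightarrow> 'a \<Rightarrow> 'b) \<Rightarrow> bool" where
  "csg_morphism G act d s H act' d' s' f \<longleftrightarrow>
     (\<forall>n. f n \<in> hom (G n) (H n)) \<and>
     simplicial_map (\<lambda>n. carrier (G n)) d s (\<lambda>n. carrier (H n)) d' s' f \<and>
     (\<forall>n g i. g \<in> carrier (G n) \<longrightarrow> i \<le> n \<longrightarrow> act' n (f n g) i = act n g i)"

fun iter_degen :: "(nat \<Rightarrow> nat \<Rightarrow> 'a \<Rightarrow> 'a) \<Rightarrow> nat \<Rightarrow> nat list \<Rightarrow> 'a \<Rightarrow> 'a" where
  "iter_degen s n [] g = g"
| "iter_degen s n (i # is) g = iter_degen s (Suc n) is (s n i g)"

definition admissible_degen :: "nat \<Rightarrow> nat list \<Rightarrow> bool" where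
  "admissible_degen n is \<longleftrightarrow> (\<forall>k < length is. is ! k \<le> n + k)"

text \<open>The canonical normal simplicial subgroup P of the structure theorem
  (Fiedorowicz--Loday, Krasauskas): the elements g of G n that are mapped to the identity
  of the hyperoctahedral crossed simplicial group, i.e. g and all of its iterated
  degeneracies act trivially (on [n], resp. on the higher [m]).\<close>

definition structural_kernel ::
  "(nat \<Rightarrow> 'a monoid) \<Rightarrow> (nat \<Rightarrow> 'a \<Rightarrow> nat \<Rightarrow> nat) \<Rightarrow> (nat \<Rightarrow> nat \<Rightarrow> 'a \<Rightarrow> 'a) \<Rightarrow> nat \<Rightarrow> 'a set" where
  "structural_kernel G act s n =
     {g \<in> carrier (G n). \<forall>is. admissible_degen n is \<longrightarrow>
        (\<forall>j \<le> n + length is. act (n + length is) (iter_degen s n is g) j = j)}"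

text \<open>The structural projection G \<rightarrow> N: a levelwise surjective morphism of crossed
  simplicial groups whose kernel is exactly the canonical subgroup P; thus N is
  (canonically isomorphic to) G/P, the crossed simplicial group of the structure theorem.\<close>

definition structural_projection ::
  "(nat \<Rightarrow> 'a monoid) \<Rightarrow> (nat \<Rightarrow> 'a \<Rightarrow> nat \<Rightarrow> nat) \<Rightarrow>
   (nat \<Rightarrow> nat \<Rightarrow> 'a \<Rightarrow> 'a) \<Rightarrow> (nat \<Rightarrow> nat \<Rightarrow> 'a \<Rightarrow> 'a) \<Rightarrow>
   (nat \<Rightarrow> 'b monoid) \<Rightarrow> (nat \<Rightarrow> 'b \<Rightarrow> nat \<Rightarrow> nat) \<Rightarrow>
   (nat \<Rightarrow> nat \<Rightarrow> 'b \<Rightarrow> 'b) \<Rightarrow> (nat \<Rightarrow> nat \<Rightarrow> 'b \<Rightarrow> 'b) \<Rightarrow>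
   (nat \<Rightarrow> 'a \<Rightarrow> 'b) \<Rightarrow> bool" where
  "structural_projection G act d s N act' d' s' p \<longleftrightarrow>
     crossed_simplicial_group N act' d' s' \<and>
     csg_morphism G act d s N act' d' s' p \<and>
     (\<forall>n. p n ` carrier (G n) = carrier (N n)) \<and>
     (\<forall>n g. g \<in> carrier (G n) \<longrightarrow> (p n g = \<one>\<^bsub>N n\<^esub> \<longleftrightarrow> g \<in> structural_kernel G act s n))"

end

(*
  The kernel P of the structural projection acts trivially on every [n], so by the crossed
  relations the face and degeneracy maps restrict to group homomorphisms on P: P is a simplicial
  group and hence, by Moore's theorem, every horn in P has a filler.  Given a horn (x_i) in G over
  an (n+1)-simplex y of N, lift y to z = eta y.  The elements x_i (d_i z)^-1 lie in P and form a
  horn there; if h fills it, then h z fills the original horn and lies over y.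
*)
theory Submission
  imports Defs "HOL-Algebra.Coset"
begin

lemma
  assumes "simplicial_set X d s"
  shows simplicial_face_closed: "i \<le> Suc n \<Longrightarrow> x \<in> X (Suc n) \<Longrightarrow> d n i x \<in> X n"
    and simplicial_degen_closed: "i \<le> n \<Longrightarrow> x \<in> X n \<Longrightarrow> s n i x \<in> X (Suc n)"
    and simplicial_face_face: "i < j \<Longrightarrow> j \<le> Suc (Suc n) \<Longrightarrow> x \<in> X (Suc (Suc n)) \<Longrightarrow>
      d n i (d (Suc n) j x) = d n (j - 1) (d (Suc n) i x)"
    and simplicial_face_degen_less: "i < j \<Longrightarrow> j \<le> Suc n \<Longrightarrow> x \<in> X (Suc n) \<Longrightarrow>
      d (Suc n) i (s (Suc n) j x) = s n (j - 1) (d n i x)"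
    and simplicial_face_degen_eq: "j \<le> n \<Longrightarrow> x \<in> X n \<Longrightarrow> d n j (s n j x) = x"
    and simplicial_face_degen_Suc_eq: "j \<le> n \<Longrightarrow> x \<in> X n \<Longrightarrow> d n (Suc j) (s n j x) = x"
    and simplicial_face_degen_greater: "Suc j < i \<Longrightarrow> i \<le> Suc (Suc n) \<Longrightarrow> x \<in> X (Suc n) \<Longrightarrow>
      d (Suc n) i (s (Suc n) j x) = s n j (d n (i - 1) x)"
  using assms unfolding simplicial_set_def by simp_all

lemma simplicial_set_subset:
  assumes "simplicial_set X d s" and "\<And>n. Y n \<subseteq> X n"
    and "\<And>n i x. i \<le> Suc n \<Longrightarrow> x \<in> Y (Suc n) \<Longrightarrow> d n i x \<in> Y n"
    and "\<And>n i x. i \<le> n \<Longrightarrow> x \<in> Y n \<Longrightarrow> s n i x \<in> Y (Suc n)"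
  shows "simplicial_set Y d s"
  using assms unfolding simplicial_set_def by (meson subsetD)

lemma
  assumes "simplicial_map X d s Y d' s' f"
  shows simplicial_map_closed: "x \<in> X n \<Longrightarrow> f n x \<in> Y n"
    and simplicial_map_face: "i \<le> Suc n \<Longrightarrow> x \<in> X (Suc n) \<Longrightarrow> f n (d n i x) = d' n i (f (Suc n) x)"
    and simplicial_map_degen: "i \<le> n \<Longrightarrow> x \<in> X n \<Longrightarrow> f (Suc n) (s n i x) = s' n i (f n x)"
  using assms unfolding simplicial_map_def by blast+

definition horn :: "(nat \<Rightarrow> 'a set) \<Rightarrow> (nat \<Rightarrow> nat \<Rightarrow> 'a \<Rightarrow> 'a) \<Rightarrow> nat \<Rightarrow> nat \<Rightarrow> (nat \<Rightarrow> 'a) \<Rightarrow> bool" where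
  "horn X d n k xs \<longleftrightarrow>
     (\<forall>i \<le> Suc n. i \<noteq> k \<longrightarrow> xs i \<in> X n) \<and>
     (\<forall>i j. i < j \<longrightarrow> j \<le> Suc n \<longrightarrow> i \<noteq> k \<longrightarrow> j \<noteq> k \<longrightarrow> 0 < n \<longrightarrow>
        d (n - 1) i (xs j) = d (n - 1) (j - 1) (xs i))"

lemma horn_mem: "horn X d n k xs \<Longrightarrow> i \<le> Suc n \<Longrightarrow> i \<noteq> k \<Longrightarrow> xs i \<in> X n"
  unfolding horn_def by blast

lemma horn_compat:
  "horn X d (Suc m) k xs \<Longrightarrow> i < j \<Longrightarrow> j \<le> Suc (Suc m) \<Longrightarrow> i \<noteq> k \<Longrightarrow> j \<noteq> k \<Longrightarrow>
    d m i (xs j) = d m (j - 1) (xs i)"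
  unfolding horn_def by fastforce

lemma hornI:
  assumes "\<And>i. i \<le> Suc n \<Longrightarrow> i \<noteq> k \<Longrightarrow> xs i \<in> X n"
    and "\<And>m i j. n = Suc m \<Longrightarrow> i < j \<Longrightarrow> j \<le> Suc n \<Longrightarrow> i \<noteq> k \<Longrightarrow> j \<noteq> k \<Longrightarrow>
      d m i (xs j) = d m (j - 1) (xs i)"
  shows "horn X d n k xs"
  using assms unfolding horn_def by (metis Suc_pred')

lemma kan_fibrationI:
  assumes "simplicial_map X d s Y d' s' f"
    and "\<And>n k xs y. k \<le> Suc n \<Longrightarrow> horn X d n k xs \<Longrightarrow> y \<in> Y (Suc n) \<Longrightarrow>
      (\<And>i. i \<le> Suc n \<Longrightarrow> i \<noteq> k \<Longrightarrow> d' n i y = f n (xs i)) \<Longrightarrow>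
      \<exists>x \<in> X (Suc n). (\<forall>i \<le> Suc n. i \<noteq> k \<longrightarrow> d n i x = xs i) \<and> f (Suc n) x = y"
  shows "kan_fibration X d s Y d' s' f"
  using assms unfolding kan_fibration_def horn_def by simp

locale simplicial_group =
  fixes H :: "nat \<Rightarrow> 'a monoid" and d s :: "nat \<Rightarrow> nat \<Rightarrow> 'a \<Rightarrow> 'a"
  assumes group: "group (H n)"
    and simplicial: "simplicial_set (\<lambda>n. carrier (H n)) d s"
    and face_hom: "i \<le> Suc n \<Longrightarrow> d n i \<in> hom (H (Suc n)) (H n)"
    and degen_hom: "i \<le> n \<Longrightarrow> s n i \<in> hom (H n) (H (Suc n))"
begin

lemma face_group_hom: "i \<le> Suc n \<Longrightarrow> group_hom (H (Suc n)) (H n) (d n i)"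
  by (simp add: group face_hom group_hom.intro group_hom_axioms.intro)

lemma degen_group_hom: "i \<le> n \<Longrightarrow> group_hom (H n) (H (Suc n)) (s n i)"
  by (simp add: group degen_hom group_hom.intro group_hom_axioms.intro)

lemmas face_closed = simplicial_face_closed[OF simplicial]
  and degen_closed = simplicial_degen_closed[OF simplicial]
  and face_face = simplicial_face_face[OF simplicial]
  and face_degen_less = simplicial_face_degen_less[OF simplicial]
  and face_degen_eq = simplicial_face_degen_eq[OF simplicial]
  and face_degen_Suc_eq = simplicial_face_degen_Suc_eq[OF simplicial]
  and face_degen_greater = simplicial_face_degen_greater[OF simplicial]

lemma face_mult:
  "i \<le> Suc n \<Longrightarrow> x \<in> carrier (H (Suc n)) \<Longrightarrow> y \<in> carrier (H (Suc n)) \<Longrightarrow>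
    d n i (x \<otimes>\<^bsub>H (Suc n)\<^esub> y) = d n i x \<otimes>\<^bsub>H n\<^esub> d n i y"
  by (rule group_hom.hom_mult[OF face_group_hom])

lemma face_inv:
  "i \<le> Suc n \<Longrightarrow> x \<in> carrier (H (Suc n)) \<Longrightarrow> d n i (inv\<^bsub>H (Suc n)\<^esub> x) = inv\<^bsub>H n\<^esub> d n i x"
  by (rule group_hom.hom_inv[OF face_group_hom])

lemma degen_one: "i \<le> n \<Longrightarrow> s n i \<one>\<^bsub>H n\<^esub> = \<one>\<^bsub>H (Suc n)\<^esub>"
  by (rule group_hom.hom_one[OF degen_group_hom])

text \<open>Moore's correction: multiplying by \<open>s n r u\<close> repairs face \<open>r\<close> and leaves the faces
  \<open>i < r\<close> alone, since there \<open>d i (s r u) = s (r - 1) (d i u)\<close> and the horn compatibility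
  gives \<open>d i u = \<one>\<close>.  The faces above the missing one are repaired symmetrically from the
  top, multiplying on the right by \<open>s n q u\<close>.\<close>

lemma horn_fill_lower_step:
  assumes ys: "horn (\<lambda>n. carrier (H n)) d n k ys" and r: "r < k" "k \<le> Suc n"
    and g: "g \<in> carrier (H (Suc n))" "\<forall>i<r. d n i g = ys i"
  shows "\<exists>g' \<in> carrier (H (Suc n)). \<forall>i<Suc r. d n i g' = ys i"
proof -
  interpret Hn: group "H n" by (rule group)
  interpret HSn: group "H (Suc n)" by (rule group)
  have rn: "r \<le> n" using r by simp
  have dg: "d n r g \<in> carrier (H n)" and ysr: "ys r \<in> carrier (H n)"
    using face_closed g rn horn_mem[OF ys] r by auto
  define u where "u = ys r \<otimes>\<^bsub>H n\<^esub> inv\<^bsub>H n\<^esub> (d n r g)"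
  have u: "u \<in> carrier (H n)" using dg ysr by (simp add: u_def)
  have su: "s n r u \<in> carrier (H (Suc n))" using degen_closed[OF rn u] .
  show ?thesis
  proof (intro bexI allI impI)
    fix i assume "i < Suc r"
    then consider "i = r" | "i < r" by linarith
    then show "d n i (s n r u \<otimes>\<^bsub>H (Suc n)\<^esub> g) = ys i"
    proof cases
      case 1
      then show ?thesis using face_mult su g rn face_degen_eq[OF rn u] dg ysr
        by (simp add: u_def Hn.m_assoc)
    next
      case 2
      then obtain m where m: "n = Suc m" using rn by (cases n) auto
      have ysi: "ys i \<in> carrier (H n)" using horn_mem[OF ys] 2 r by simp
      have "d m i u = d m i (ys r) \<otimes>\<^bsub>H m\<^esub> inv\<^bsub>H m\<^esub> d m i (d n r g)"
        using face_mult face_inv group.inv_closed[OF group] dg ysr 2 rn m by (simp add: u_def)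
      also have "d m i (d n r g) = d m (r - 1) (ys i)"
        using face_face[of i r m g] 2 rn m g by simp
      also have "d m i (ys r) = d m (r - 1) (ys i)"
        using horn_compat[of "\<lambda>n. carrier (H n)" d m k ys i r] ys 2 r m by simp
      finally have "d m i u = \<one>\<^bsub>H m\<^esub>"
        using group.r_inv[OF group] face_closed ysi rn m by simp
      then have "d n i (s n r u) = \<one>\<^bsub>H n\<^esub>"
        using face_degen_less[of i r m u] degen_one 2 rn m u by simp
      then show ?thesis using face_mult su g 2 rn ysi by simp
    qed
  qed (use su g in simp)
qed

lemma horn_fill_lower:
  assumes ys: "horn (\<lambda>n. carrier (H n)) d n k ys" and k: "k \<le> Suc n"
  shows "r \<le> k \<Longrightarrow> \<exists>g \<in> carrier (H (Suc n)). \<forall>i<r. d n i g = ys i"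
proof (induction r)
  case 0
  show ?case using monoid.one_closed[OF group.is_monoid[OF group]] by blast
next
  case (Suc r)
  then show ?case using horn_fill_lower_step[OF ys _ k] by (meson Suc_le_lessD less_imp_le)
qed

lemma horn_fill_upper_step:
  assumes ys: "horn (\<lambda>n. carrier (H n)) d n k ys" and q: "k \<le> q" "q \<le> n"
    and g: "g \<in> carrier (H (Suc n))" "\<forall>i \<in> {..<k} \<union> {Suc q<..Suc n}. d n i g = ys i"
  shows "\<exists>g' \<in> carrier (H (Suc n)). \<forall>i \<in> {..<k} \<union> {q<..Suc n}. d n i g' = ys i"
proof -
  interpret Hn: group "H n" by (rule group)
  interpret HSn: group "H (Suc n)" by (rule group)
  have dg: "d n (Suc q) g \<in> carrier (H n)" and ysq: "ys (Suc q) \<in> carrier (H n)"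
    using face_closed g q horn_mem[OF ys] by auto
  define u where "u = inv\<^bsub>H n\<^esub> (d n (Suc q) g) \<otimes>\<^bsub>H n\<^esub> ys (Suc q)"
  have u: "u \<in> carrier (H n)" using dg ysq by (simp add: u_def)
  have su: "s n q u \<in> carrier (H (Suc n))" using degen_closed[OF q(2) u] .
  have face_u: "d m a u = \<one>\<^bsub>H m\<^esub>"
    if m: "n = Suc m" and a: "a \<le> n" and same: "d m a (d n (Suc q) g) = d m a (ys (Suc q))" for m a
  proof -
    have "d m a u = inv\<^bsub>H m\<^esub> d m a (d n (Suc q) g) \<otimes>\<^bsub>H m\<^esub> d m a (ys (Suc q))"
      using face_mult face_inv group.inv_closed[OF group] dg ysq a m by (simp add: u_def)
    then show ?thesis using group.l_inv[OF group] face_closed same ysq a m by simp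
  qed
  show ?thesis
  proof (intro bexI ballI)
    fix i assume i: "i \<in> {..<k} \<union> {q<..Suc n}"
    have i_le: "i \<le> Suc n" using i q by auto
    have split: "d n i (g \<otimes>\<^bsub>H (Suc n)\<^esub> s n q u) = d n i g \<otimes>\<^bsub>H n\<^esub> d n i (s n q u)"
      using face_mult[OF i_le g(1) su] .
    consider "i = Suc q" | "Suc q < i" | "i < k" using i by fastforce
    then show "d n i (g \<otimes>\<^bsub>H (Suc n)\<^esub> s n q u) = ys i"
    proof cases
      case 1
      then show ?thesis using split face_degen_Suc_eq[OF q(2) u] dg ysq
        by (simp add: u_def Hn.m_assoc[symmetric])
    next
      case 2
      then obtain m where m: "n = Suc m" using i_le by (cases n) auto
      have "d m (i - 1) (d n (Suc q) g) = d m (Suc q) (ys i)"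
        using face_face[of "Suc q" i m g] 2 i_le m g by simp
      also have "\<dots> = d m (i - 1) (ys (Suc q))"
        using horn_compat[of "\<lambda>n. carrier (H n)" d m k ys "Suc q" i] ys 2 i_le q m by simp
      finally have "d m (i - 1) u = \<one>\<^bsub>H m\<^esub>" using face_u m i_le by simp
      then have "d n i (s n q u) = \<one>\<^bsub>H n\<^esub>"
        using face_degen_greater[of q i m u] degen_one 2 i_le q m u by simp
      then show ?thesis using split g 2 horn_mem[OF ys] i_le q by simp
    next
      case 3
      then obtain m where m: "n = Suc m" using q by (cases n) auto
      have "d m i (d n (Suc q) g) = d m q (ys i)"
        using face_face[of i "Suc q" m g] 3 q m g by simp
      also have "\<dots> = d m i (ys (Suc q))"
        using horn_compat[of "\<lambda>n. carrier (H n)" d m k ys i "Suc q"] ys 3 q m by simp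
      finally have "d m i u = \<one>\<^bsub>H m\<^esub>" using face_u m 3 q by simp
      then have "d n i (s n q u) = \<one>\<^bsub>H n\<^esub>"
        using face_degen_less[of i q m u] degen_one 3 q m u by simp
      then show ?thesis using split g 3 horn_mem[OF ys] q by simp
    qed
  qed (use su g in simp)
qed

lemma horn_fill_upper:
  assumes ys: "horn (\<lambda>n. carrier (H n)) d n k ys" and "k \<le> q" "q \<le> Suc n"
  shows "\<exists>g \<in> carrier (H (Suc n)). \<forall>i \<in> {..<k} \<union> {q<..Suc n}. d n i g = ys i"
  using \<open>q \<le> Suc n\<close>
proof (induction q rule: inc_induct)
  case base
  then show ?case using horn_fill_lower[OF ys, of k] assms(2,3) by auto
next
  case (step q')
  then show ?case using horn_fill_upper_step[OF ys, of q'] assms(2) by auto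
qed

theorem horn_filler:
  assumes ys: "horn (\<lambda>n. carrier (H n)) d n k ys" and k: "k \<le> Suc n"
  shows "\<exists>g \<in> carrier (H (Suc n)). \<forall>i \<le> Suc n. i \<noteq> k \<longrightarrow> d n i g = ys i"
proof -
  obtain g where "g \<in> carrier (H (Suc n))" "\<forall>i \<in> {..<k} \<union> {k<..Suc n}. d n i g = ys i"
    using horn_fill_upper[OF ys order_refl k] by blast
  then show ?thesis by (meson UnI1 UnI2 greaterThanAtMost_iff lessThan_iff linorder_neqE_nat)
qed

end

lemma
  assumes "crossed_simplicial_group G act d s"
  shows csg_group: "group (G n)"
    and csg_simplicial: "simplicial_set (\<lambda>n. carrier (G n)) d s"
    and csg_act_one: "i \<le> n \<Longrightarrow> act n \<one>\<^bsub>G n\<^esub> i = i"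
    and csg_face_mult: "i \<le> Suc n \<Longrightarrow> g \<in> carrier (G (Suc n)) \<Longrightarrow> h \<in> carrier (G (Suc n)) \<Longrightarrow>
      d n i (g \<otimes>\<^bsub>G (Suc n)\<^esub> h) = d n i g \<otimes>\<^bsub>G n\<^esub> d n (act (Suc n) (inv\<^bsub>G (Suc n)\<^esub> g) i) h"
    and csg_degen_mult: "i \<le> n \<Longrightarrow> g \<in> carrier (G n) \<Longrightarrow> h \<in> carrier (G n) \<Longrightarrow>
      s n i (g \<otimes>\<^bsub>G n\<^esub> h) = s n i g \<otimes>\<^bsub>G (Suc n)\<^esub> s n (act n (inv\<^bsub>G n\<^esub> g) i) h"
  using assms unfolding crossed_simplicial_group_def by simp_all

lemma csg_face_one:
  assumes G: "crossed_simplicial_group G act d s" and i: "i \<le> Suc n"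
  shows "d n i \<one>\<^bsub>G (Suc n)\<^esub> = \<one>\<^bsub>G n\<^esub>"
proof -
  interpret Gn: group "G n" by (rule csg_group[OF G])
  interpret GSn: group "G (Suc n)" by (rule csg_group[OF G])
  have "d n i \<one>\<^bsub>G (Suc n)\<^esub> = d n i \<one>\<^bsub>G (Suc n)\<^esub> \<otimes>\<^bsub>G n\<^esub> d n i \<one>\<^bsub>G (Suc n)\<^esub>"
    using csg_face_mult[OF G i, of "\<one>\<^bsub>G (Suc n)\<^esub>" "\<one>\<^bsub>G (Suc n)\<^esub>"] csg_act_one[OF G i] by simp
  then show ?thesis
    using simplicial_face_closed[OF csg_simplicial[OF G] i] by (metis GSn.one_closed Gn.l_cancel_one')
qed

lemma csg_degen_one:
  assumes G: "crossed_simplicial_group G act d s" and i: "i \<le> n"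
  shows "s n i \<one>\<^bsub>G n\<^esub> = \<one>\<^bsub>G (Suc n)\<^esub>"
proof -
  interpret Gn: group "G n" by (rule csg_group[OF G])
  interpret GSn: group "G (Suc n)" by (rule csg_group[OF G])
  have "s n i \<one>\<^bsub>G n\<^esub> = s n i \<one>\<^bsub>G n\<^esub> \<otimes>\<^bsub>G (Suc n)\<^esub> s n i \<one>\<^bsub>G n\<^esub>"
    using csg_degen_mult[OF G i, of "\<one>\<^bsub>G n\<^esub>" "\<one>\<^bsub>G n\<^esub>"] csg_act_one[OF G i] by simp
  then show ?thesis
    using simplicial_degen_closed[OF csg_simplicial[OF G] i] by (metis Gn.one_closed GSn.l_cancel_one')
qed

locale csg_trivial_action_subgroup =
  fixes G :: "nat \<Rightarrow> 'a monoid" and act :: "nat \<Rightarrow> 'a \<Rightarrow> nat \<Rightarrow> nat"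
    and d s :: "nat \<Rightarrow> nat \<Rightarrow> 'a \<Rightarrow> 'a" and K :: "nat \<Rightarrow> 'a set"
  assumes csg: "crossed_simplicial_group G act d s"
    and subgroup: "subgroup (K n) (G n)"
    and face_closed: "i \<le> Suc n \<Longrightarrow> g \<in> K (Suc n) \<Longrightarrow> d n i g \<in> K n"
    and degen_closed: "i \<le> n \<Longrightarrow> g \<in> K n \<Longrightarrow> s n i g \<in> K (Suc n)"
    and act_trivial: "g \<in> K n \<Longrightarrow> i \<le> n \<Longrightarrow> act n g i = i"
begin

lemma face_mult_left:
  assumes "g \<in> K (Suc n)" "h \<in> carrier (G (Suc n))" "i \<le> Suc n"
  shows "d n i (g \<otimes>\<^bsub>G (Suc n)\<^esub> h) = d n i g \<otimes>\<^bsub>G n\<^esub> d n i h"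
  using csg_face_mult[OF csg assms(3) subgroup.mem_carrier[OF subgroup assms(1)] assms(2)]
    act_trivial[OF subgroup.m_inv_closed[OF subgroup assms(1)] assms(3)] by simp

lemma degen_mult_left:
  assumes "g \<in> K n" "h \<in> carrier (G n)" "i \<le> n"
  shows "s n i (g \<otimes>\<^bsub>G n\<^esub> h) = s n i g \<otimes>\<^bsub>G (Suc n)\<^esub> s n i h"
  using csg_degen_mult[OF csg assms(3) subgroup.mem_carrier[OF subgroup assms(1)] assms(2)]
    act_trivial[OF subgroup.m_inv_closed[OF subgroup assms(1)] assms(3)] by simp

lemma simplicial_group: "simplicial_group (\<lambda>n. (G n)\<lparr>carrier := K n\<rparr>) d s"
proof (rule simplicial_group.intro)
  show "group ((G n)\<lparr>carrier := K n\<rparr>)" for n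
    by (rule subgroup.subgroup_is_group[OF subgroup csg_group[OF csg]])
  show "simplicial_set (\<lambda>n. carrier ((G n)\<lparr>carrier := K n\<rparr>)) d s"
    using simplicial_set_subset[OF csg_simplicial[OF csg]] subgroup.subset[OF subgroup]
      face_closed degen_closed by simp
  show "d n i \<in> hom ((G (Suc n))\<lparr>carrier := K (Suc n)\<rparr>) ((G n)\<lparr>carrier := K n\<rparr>)"
    if "i \<le> Suc n" for n i
    using that face_closed face_mult_left subgroup.mem_carrier[OF subgroup] by (auto simp: hom_def)
  show "s n i \<in> hom ((G n)\<lparr>carrier := K n\<rparr>) ((G (Suc n))\<lparr>carrier := K (Suc n)\<rparr>)"
    if "i \<le> n" for n i
    using that degen_closed degen_mult_left subgroup.mem_carrier[OF subgroup] by (auto simp: hom_def)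
qed

lemma horn_fill_coset:
  assumes k: "k \<le> Suc n" and xs: "horn (\<lambda>n. carrier (G n)) d n k xs"
    and z: "z \<in> carrier (G (Suc n))"
    and congruent: "\<And>i. i \<le> Suc n \<Longrightarrow> i \<noteq> k \<Longrightarrow> xs i \<otimes>\<^bsub>G n\<^esub> inv\<^bsub>G n\<^esub> d n i z \<in> K n"
  shows "\<exists>h \<in> K (Suc n). \<forall>i \<le> Suc n. i \<noteq> k \<longrightarrow> d n i (h \<otimes>\<^bsub>G (Suc n)\<^esub> z) = xs i"
proof -
  interpret Gn: group "G n" by (rule csg_group[OF csg])
  define ys where "ys i = xs i \<otimes>\<^bsub>G n\<^esub> inv\<^bsub>G n\<^esub> d n i z" for i
  have dz: "d n i z \<in> carrier (G n)" if "i \<le> Suc n" for i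
    using simplicial_face_closed[OF csg_simplicial[OF csg] that z] .
  have ys: "ys i \<in> K n" if "i \<le> Suc n" "i \<noteq> k" for i
    using congruent[OF that] by (simp add: ys_def)
  have xs_ys: "xs i = ys i \<otimes>\<^bsub>G n\<^esub> d n i z" if "i \<le> Suc n" "i \<noteq> k" for i
    using horn_mem[OF xs that] dz[OF that(1)] by (simp add: ys_def Gn.m_assoc)
  have "horn K d n k ys"
  proof (rule hornI)
    show "ys i \<in> K n" if "i \<le> Suc n" "i \<noteq> k" for i
      using ys[OF that] .
  next
    fix m i j assume m: "n = Suc m" and ij: "i < j" "j \<le> Suc n" "i \<noteq> k" "j \<noteq> k"
    interpret Gm: group "G m" by (rule csg_group[OF csg])
    have face_ys: "d m a (ys l) = d m a (xs l) \<otimes>\<^bsub>G m\<^esub> inv\<^bsub>G m\<^esub> d m a (d n l z)"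
      if "a \<le> n" "l \<le> Suc n" "l \<noteq> k" for a l
    proof -
      have "d m a (xs l) = d m a (ys l) \<otimes>\<^bsub>G m\<^esub> d m a (d n l z)"
        using xs_ys[OF that(2,3)] face_mult_left[of "ys l" m "d n l z" a] ys[OF that(2,3)]
          dz[OF that(2)] that m by simp
      moreover have "d m a (ys l) \<in> carrier (G m)" "d m a (d n l z) \<in> carrier (G m)"
        using face_closed ys[OF that(2,3)] subgroup.mem_carrier[OF subgroup]
          simplicial_face_closed[OF csg_simplicial[OF csg]] dz[OF that(2)] that m by auto
      ultimately show ?thesis by (simp add: Gm.m_assoc)
    qed
    have "d m i (d n j z) = d m (j - 1) (d n i z)"
      using simplicial_face_face[OF csg_simplicial[OF csg], of i j m z] ij z m by simp
    then show "d m i (ys j) = d m (j - 1) (ys i)"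
      using face_ys[of i j] face_ys[of "j - 1" i] horn_compat[of _ d m k xs, OF _ ij(1)] xs ij m
      by simp
  qed
  then obtain h where h: "h \<in> K (Suc n)" and h_faces: "\<forall>i \<le> Suc n. i \<noteq> k \<longrightarrow> d n i h = ys i"
    using simplicial_group.horn_filler[OF simplicial_group, of n k ys] k by auto
  show ?thesis
    using h_faces xs_ys face_mult_left[OF h z] by (intro bexI[OF _ h]) simp
qed

end

lemma csg_trivial_action_subgroup_kernel:
  assumes G: "crossed_simplicial_group G act d s" and N: "crossed_simplicial_group N act' d' s'"
    and p_hom: "\<And>n. p n \<in> hom (G n) (N n)"
    and p: "simplicial_map (\<lambda>n. carrier (G n)) d s (\<lambda>n. carrier (N n)) d' s' p"
    and kernel_act: "\<And>n g i. g \<in> kernel (G n) (N n) (p n) \<Longrightarrow> i \<le> n \<Longrightarrow> act n g i = i"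
  shows "csg_trivial_action_subgroup G act d s (\<lambda>n. kernel (G n) (N n) (p n))"
proof (rule csg_trivial_action_subgroup.intro)
  show "subgroup (kernel (G n) (N n) (p n)) (G n)" for n
    by (simp add: csg_group[OF G] csg_group[OF N] p_hom group_hom.intro group_hom_axioms.intro
        group_hom.subgroup_kernel)
  show "d n i g \<in> kernel (G n) (N n) (p n)"
    if "i \<le> Suc n" "g \<in> kernel (G (Suc n)) (N (Suc n)) (p (Suc n))" for n i g
    using that simplicial_map_face[OF p] csg_face_one[OF N] simplicial_face_closed[OF csg_simplicial[OF G]]
    by (auto simp: kernel_def)
  show "s n i g \<in> kernel (G (Suc n)) (N (Suc n)) (p (Suc n))"
    if "i \<le> n" "g \<in> kernel (G n) (N n) (p n)" for n i g
    using that simplicial_map_degen[OF p] csg_degen_one[OF N] simplicial_degen_closed[OF csg_simplicial[OF G]]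
    by (auto simp: kernel_def)
qed (fact G kernel_act)+

theorem kan_fibration_of_section:
  assumes G: "crossed_simplicial_group G act d s" and N: "crossed_simplicial_group N act' d' s'"
    and p_hom: "\<And>n. p n \<in> hom (G n) (N n)"
    and p: "simplicial_map (\<lambda>n. carrier (G n)) d s (\<lambda>n. carrier (N n)) d' s' p"
    and kernel_act: "\<And>n g i. g \<in> kernel (G n) (N n) (p n) \<Longrightarrow> i \<le> n \<Longrightarrow> act n g i = i"
    and \<eta>: "simplicial_map (\<lambda>n. carrier (N n)) d' s' (\<lambda>n. carrier (G n)) d s \<eta>"
    and splitting: "\<And>n x. x \<in> carrier (N n) \<Longrightarrow> p n (\<eta> n x) = x"
  shows "kan_fibration (\<lambda>n. carrier (G n)) d s (\<lambda>n. carrier (N n)) d' s' p"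
proof -
  have p_group_hom: "group_hom (G n) (N n) (p n)" for n
    by (simp add: csg_group[OF G] csg_group[OF N] p_hom group_hom.intro group_hom_axioms.intro)
  interpret K: csg_trivial_action_subgroup G act d s "\<lambda>n. kernel (G n) (N n) (p n)"
    by (rule csg_trivial_action_subgroup_kernel[OF G N p_hom p kernel_act])
  show ?thesis
  proof (rule kan_fibrationI[OF p])
    fix n k xs y
    assume k: "k \<le> Suc n" and xs: "horn (\<lambda>n. carrier (G n)) d n k xs" and y: "y \<in> carrier (N (Suc n))"
      and y_faces: "\<And>i. i \<le> Suc n \<Longrightarrow> i \<noteq> k \<Longrightarrow> d' n i y = p n (xs i)"
    interpret Gn: group "G n" by (rule csg_group[OF G])
    interpret Nn: group "N n" by (rule csg_group[OF N])
    interpret NSn: group "N (Suc n)" by (rule csg_group[OF N])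
    define z where "z = \<eta> (Suc n) y"
    have z: "z \<in> carrier (G (Suc n))" and pz: "p (Suc n) z = y"
      using simplicial_map_closed[OF \<eta> y] splitting[OF y] by (simp_all add: z_def)
    have "xs i \<otimes>\<^bsub>G n\<^esub> inv\<^bsub>G n\<^esub> d n i z \<in> kernel (G n) (N n) (p n)" if "i \<le> Suc n" "i \<noteq> k" for i
    proof -
      have "p n (d n i z) = p n (xs i)" using simplicial_map_face[OF p that(1) z] pz y_faces[OF that] by simp
      moreover have "xs i \<in> carrier (G n)" "d n i z \<in> carrier (G n)"
        using horn_mem[OF xs that] simplicial_face_closed[OF csg_simplicial[OF G] that(1) z] .
      ultimately show ?thesis
        using group_hom.hom_mult[OF p_group_hom] group_hom.hom_inv[OF p_group_hom]
          hom_in_carrier[OF p_hom] by (simp add: kernel_def)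
    qed
    then obtain h where h: "h \<in> kernel (G (Suc n)) (N (Suc n)) (p (Suc n))"
      and h_faces: "\<forall>i \<le> Suc n. i \<noteq> k \<longrightarrow> d n i (h \<otimes>\<^bsub>G (Suc n)\<^esub> z) = xs i"
      using K.horn_fill_coset[OF k xs z] by blast
    have h_carrier: "h \<in> carrier (G (Suc n))" and ph: "p (Suc n) h = \<one>\<^bsub>N (Suc n)\<^esub>"
      using h by (simp_all add: kernel_def)
    have "p (Suc n) (h \<otimes>\<^bsub>G (Suc n)\<^esub> z) = y"
      using group_hom.hom_mult[OF p_group_hom h_carrier z] ph pz y by simp
    moreover have "h \<otimes>\<^bsub>G (Suc n)\<^esub> z \<in> carrier (G (Suc n))"
      using group.subgroup_self[OF csg_group[OF G]] h_carrier z by (simp add: subgroup.m_closed)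
    ultimately show "\<exists>x \<in> carrier (G (Suc n)). (\<forall>i \<le> Suc n. i \<noteq> k \<longrightarrow> d n i x = xs i) \<and> p (Suc n) x = y"
      using h_faces by blast
  qed
qed

lemma structural_kernel_act:
  assumes "g \<in> structural_kernel G act s n" and "i \<le> n"
  shows "act n g i = i"
proof -
  have "\<forall>is. admissible_degen n is \<longrightarrow>
      (\<forall>j \<le> n + length is. act (n + length is) (iter_degen s n is g) j = j)"
    using assms(1) unfolding structural_kernel_def by blast
  moreover have "admissible_degen n []" by (simp add: admissible_degen_def)
  ultimately show ?thesis using assms(2) by (metis add_0_right iter_degen.simps(1) list.size(3))
qed

theorem theoremB1:
  fixes G :: "nat \<Rightarrow> 'a monoid" and act :: "nat \<Rightarrow> 'a \<Rightarrow> nat \<Rightarrow> nat"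
    and d s :: "nat \<Rightarrow> nat \<Rightarrow> 'a \<Rightarrow> 'a"
    and N :: "nat \<Rightarrow> 'b monoid" and act' :: "nat \<Rightarrow> 'b \<Rightarrow> nat \<Rightarrow> nat"
    and d' s' :: "nat \<Rightarrow> nat \<Rightarrow> 'b \<Rightarrow> 'b"
    and p :: "nat \<Rightarrow> 'a \<Rightarrow> 'b" and \<eta> :: "nat \<Rightarrow> 'b \<Rightarrow> 'a"
  assumes "crossed_simplicial_group G act d s"
    and "structural_projection G act d s N act' d' s' p"
    and "simplicial_map (\<lambda>n. carrier (N n)) d' s' (\<lambda>n. carrier (G n)) d s \<eta>"
    and "\<And>n x. x \<in> carrier (N n) \<Longrightarrow> p n (\<eta> n x) = x"
  shows "kan_fibration (\<lambda>n. carrier (G n)) d s (\<lambda>n. carrier (N n)) d' s' p"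
proof -
  have N: "crossed_simplicial_group N act' d' s'"
    and p: "csg_morphism G act d s N act' d' s' p"
    and kernel: "\<And>n g. g \<in> carrier (G n) \<Longrightarrow> p n g = \<one>\<^bsub>N n\<^esub> \<Longrightarrow> g \<in> structural_kernel G act s n"
    using assms(2) unfolding structural_projection_def by simp_all
  have p_hom: "\<And>n. p n \<in> hom (G n) (N n)"
    and p_simplicial: "simplicial_map (\<lambda>n. carrier (G n)) d s (\<lambda>n. carrier (N n)) d' s' p"
    using p unfolding csg_morphism_def by simp_all
  have kernel_act: "act n g i = i" if "g \<in> kernel (G n) (N n) (p n)" "i \<le> n" for n g i
    using kernel[of g n] that structural_kernel_act[of g G act s n i] by (simp add: kernel_def)
  show ?thesis
    by (rule kan_fibration_of_section[OF assms(1) N p_hom p_simplicial kernel_act assms(3,4)])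
qed

end
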